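(* Let $I$ be a finite nonempty set and let $[R],[S]\in Q(I)$ be complementary equivalence relations, represented by surjections $\pi_R:I\twoheadrightarrow R$ and $\pi_S:I\twoheadrightarrow S$. Then the map $k[R]\otimes_{k[*]}k[S]\to k[I]$, $p\otimes q\mapsto \varphi_{\pi_R}(p)\varphi_{\pi_S}(q)$, is well defined and is an isomorphism of $k[R]\otimes_k k[S]$-modules; it does not depend (up to the natural identifications) on the choice of representatives $R,S$.
   Context: $k$ is a field. For a finite set $J$, $k[J]$ denotes the polynomial algebra over $k$ in variables $\lambda_j$, $j\in J$; $k[*]=k[\lambda]$ for a one-point set. $Q(I)$ is the set of equivalence relations on $I$; a surjection $\pi_R:I\twoheadrightarrow R$ determines the relation $[R]$ whose classes are $I_r=\pi_R^{-1}(r)$. A surjection $\pi:I\twoheadrightarrow R$ induces the algebra map $\varphi_\pi:k[R]\to k[I]$, $\lambda_r\mapsto\sum_{i\in I_r}\lambda_i$; $k[*]\to k[R]$ is $\lambda\mapsto\sum_{r\in R}\lambda_r$ (and similarly for $S$), making $k[R]$, $k[S]$ into $k[*]$-modules. $[R]$ with $|R|$ classes and $[S]$ with $|S|$ classes, where $|R|+|S|=|I|+1$, are called complementary if the bipartite graph with vertex set $R\sqcup S$ and one edge joining $\pi_S(i)$ to $\pi_R(i)$ for each $i\in I$ is a connected tree. *)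

theory Defs
  imports Main "HOL-Library.Poly_Mapping" "HOL-Library.Cardinality"
begin

text \<open>Polynomial algebra k[V] in variables indexed by the (finite) type 'v:
  finitely supported maps from monomials (exponent vectors) to coefficients.\<close>
type_synonym ('v, 'k) mpoly = "('v \<Rightarrow>\<^sub>0 nat) \<Rightarrow>\<^sub>0 'k"

definition Var :: "'v \<Rightarrow> ('v, 'k::zero_neq_one) mpoly" where
  "Var v = Poly_Mapping.single (Poly_Mapping.single v 1) 1"

definition subst :: "('v \<Rightarrow> ('w, 'k::comm_ring_1) mpoly) \<Rightarrow> ('v, 'k) mpoly \<Rightarrow> ('w, 'k) mpoly" where
  "subst f p = (\<Sum>(mo::'v \<Rightarrow>\<^sub>0 nat)\<in>Poly_Mapping.keys p. Poly_Mapping.single 0 (Poly_Mapping.lookup p mo) * (\<Prod>x\<in>Poly_Mapping.keys mo. f x ^ Poly_Mapping.lookup mo (x::'v)))"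

definition phi :: "('i::finite \<Rightarrow> 'r) \<Rightarrow> ('r, 'k::comm_ring_1) mpoly \<Rightarrow> ('i, 'k) mpoly" where
  "phi \<pi> = subst (\<lambda>r. \<Sum>i\<in>{i. \<pi> i = r}. Var i)"

definition rename :: "('v \<Rightarrow> 'w) \<Rightarrow> ('v, 'k::comm_ring_1) mpoly \<Rightarrow> ('w, 'k) mpoly" where
  "rename f = subst (\<lambda>v. Var (f v))"

text \<open>k[R] (x)_k k[S] is identified with k[R + S] via p (x) q |-> rename Inl p * rename Inr q.
  The k[*]-tensor product k[R] (x)_{k[*]} k[S] is the quotient of it by the ideal generated by
  lambda (x) 1 - 1 (x) lambda, i.e. by the element below.\<close>
definition tensor_rel :: "('r::finite + 's::finite, 'k::comm_ring_1) mpoly" where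
  "tensor_rel = (\<Sum>r\<in>UNIV. Var (Inl r)) - (\<Sum>s\<in>UNIV. Var (Inr s))"

definition tensor_map :: "('i::finite \<Rightarrow> 'r) \<Rightarrow> ('i \<Rightarrow> 's) \<Rightarrow> ('r + 's, 'k::comm_ring_1) mpoly \<Rightarrow> ('i, 'k) mpoly" where
  "tensor_map \<pi>R \<pi>S = subst (case_sum (\<lambda>r. \<Sum>i\<in>{i. \<pi>R i = r}. Var i) (\<lambda>s. \<Sum>i\<in>{i. \<pi>S i = s}. Var i))"

text \<open>Bipartite multigraph on R + S with one edge {pi_S i, pi_R i} for each i in I.\<close>
definition bip_adj :: "('i \<Rightarrow> 'r) \<Rightarrow> ('i \<Rightarrow> 's) \<Rightarrow> 'r + 's \<Rightarrow> 'r + 's \<Rightarrow> bool" where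
  "bip_adj \<pi>R \<pi>S x y \<longleftrightarrow> (\<exists>i. (x = Inr (\<pi>S i) \<and> y = Inl (\<pi>R i)) \<or> (x = Inl (\<pi>R i) \<and> y = Inr (\<pi>S i)))"

text \<open>A (multi)graph with vertex set R + S and edge set indexed by I is a tree iff it is
  connected and #edges + 1 = #vertices.\<close>
definition bip_is_tree :: "('i::finite \<Rightarrow> 'r::finite) \<Rightarrow> ('i \<Rightarrow> 's::finite) \<Rightarrow> bool" where
  "bip_is_tree \<pi>R \<pi>S \<longleftrightarrow> (\<forall>x y. (bip_adj \<pi>R \<pi>S)\<^sup>*\<^sup>* x y) \<and> CARD('i) + 1 = CARD('r + 's)"

definition complementary :: "('i::finite \<Rightarrow> 'r::finite) \<Rightarrow> ('i \<Rightarrow> 's::finite) \<Rightarrow> bool" where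
  "complementary \<pi>R \<pi>S \<longleftrightarrow> CARD('r) + CARD('s) = CARD('i) + 1 \<and> bip_is_tree \<pi>R \<pi>S"

end

theory Submission
  imports Defs "HOL-Analysis.Cartesian_Space"
begin

text \<open>
  On linear forms, \<open>tensor_map\<close> acts through \<open>endpoint_sum\<close>, which sends a function \<open>a\<close> on
  the vertices \<open>R + S\<close> of the bipartite graph to the function \<open>i \<mapsto> a (\<pi>R i) + a (\<pi>S i)\<close> on its
  edges \<open>I\<close>. Along a path a vanishing endpoint sum forces \<open>a\<close> to alternate in sign with constant
  absolute value, so for a connected graph the kernel of \<open>endpoint_sum\<close> is spanned by
  \<open>side_sign\<close>, the coefficient vector of the relation \<open>\<lambda> \<otimes> 1 - 1 \<otimes> \<lambda>\<close>. Since
  \<open>|R + S| = |I| + 1\<close>, \<open>endpoint_sum\<close> is then surjective, and lifting unit vectors gives linear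
  forms \<open>h i\<close> with \<open>tensor_map (h i) = \<lambda>\<^sub>i\<close>. The substitution \<open>\<lambda>\<^sub>i \<mapsto> h i\<close> is a right
  inverse of \<open>tensor_map\<close>; moreover every variable \<open>x\<close> differs from \<open>h (tensor_map x)\<close> by a
  linear form killed by \<open>endpoint_sum\<close>, i.e. by a multiple of the relation, and this congruence
  propagates from the variables to all polynomials. Hence the kernel of \<open>tensor_map\<close> is the
  principal ideal generated by the relation. Other representatives of \<open>[R]\<close> and \<open>[S]\<close> differ by
  bijections, which only rename variables.
\<close>

section \<open>Substitution into polynomials\<close>

abbreviation mconst :: "'k::comm_ring_1 \<Rightarrow> ('v, 'k) mpoly" where
  "mconst c \<equiv> Poly_Mapping.single 0 c"

definition monom_eval :: "('v \<Rightarrow> ('w, 'k::comm_ring_1) mpoly) \<Rightarrow> ('v \<Rightarrow>\<^sub>0 nat) \<Rightarrow> ('w, 'k) mpoly" where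
  "monom_eval f m = (\<Prod>x\<in>Poly_Mapping.keys m. f x ^ Poly_Mapping.lookup m x)"

lemma poly_mapping_sum_single_keys:
  "p = (\<Sum>x\<in>Poly_Mapping.keys p. Poly_Mapping.single x (Poly_Mapping.lookup p x))"
  by (rule poly_mapping_eqI) (simp add: lookup_sum lookup_single when_def in_keys_iff)

lemma monom_eval_superset:
  assumes "finite A" "Poly_Mapping.keys m \<subseteq> A"
  shows "monom_eval f m = (\<Prod>x\<in>A. f x ^ Poly_Mapping.lookup m x)"
  unfolding monom_eval_def
  by (rule prod.mono_neutral_left) (use assms in \<open>auto simp: in_keys_iff\<close>)

lemma monom_eval_add: "monom_eval f (m + n) = monom_eval f m * monom_eval f n"
proof -
  let ?A = "Poly_Mapping.keys m \<union> Poly_Mapping.keys n"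
  have "monom_eval f (m + n) = (\<Prod>x\<in>?A. f x ^ Poly_Mapping.lookup (m + n) x)"
    by (rule monom_eval_superset) (auto dest: subsetD[OF keys_add])
  also have "\<dots> = (\<Prod>x\<in>?A. f x ^ Poly_Mapping.lookup m x) * (\<Prod>x\<in>?A. f x ^ Poly_Mapping.lookup n x)"
    by (simp add: lookup_add power_add prod.distrib)
  also have "\<dots> = monom_eval f m * monom_eval f n"
    by (simp add: monom_eval_superset[symmetric])
  finally show ?thesis .
qed

lemma monom_eval_Var: "monom_eval Var m = (Poly_Mapping.single m 1 :: ('v, 'k::comm_ring_1) mpoly)"
proof -
  have single_Var_power: "Poly_Mapping.single (Poly_Mapping.single x n) 1 = (Var x :: ('v, 'k) mpoly) ^ n" for x n
  proof (induction n)
    case (Suc n)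
    have "Poly_Mapping.single (Poly_Mapping.single x (Suc n)) 1
        = Poly_Mapping.single (Poly_Mapping.single x 1 + Poly_Mapping.single x n) (1::'k)"
      by (simp flip: single_add)
    also have "\<dots> = Var x * Poly_Mapping.single (Poly_Mapping.single x n) 1"
      by (simp add: Var_def mult_single)
    finally show ?case
      by (simp add: Suc)
  qed simp
  have "monom_eval Var m
      = (\<Prod>x\<in>Poly_Mapping.keys m. Poly_Mapping.single (Poly_Mapping.single x (Poly_Mapping.lookup m x)) (1::'k))"
    by (simp add: monom_eval_def single_Var_power)
  also have "\<dots> = Poly_Mapping.single (\<Sum>x\<in>Poly_Mapping.keys m. Poly_Mapping.single x (Poly_Mapping.lookup m x)) 1"
    by (induction rule: infinite_finite_induct) (simp_all add: mult_single)
  finally show ?thesis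
    by (simp flip: poly_mapping_sum_single_keys)
qed

lemma subst_eq_sum_monom_eval:
  "subst f p = (\<Sum>m\<in>Poly_Mapping.keys p. mconst (Poly_Mapping.lookup p m) * monom_eval f m)"
  by (simp add: subst_def monom_eval_def)

lemma subst_zero [simp]: "subst f 0 = 0"
  by (simp add: subst_def)

lemma subst_add: "subst f (p + q) = subst f p + subst f q"
  unfolding subst_eq_sum_monom_eval
  by (rule setsum_keys_plus_distrib) (simp_all add: single_add distrib_right)

lemma subst_single: "subst f (Poly_Mapping.single m c) = mconst c * monom_eval f m"
  by (cases "c = 0") (simp_all add: subst_eq_sum_monom_eval)

lemma subst_sum: "subst f (sum g A) = (\<Sum>x\<in>A. subst f (g x))"
  by (induction A rule: infinite_finite_induct) (simp_all add: subst_add)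

lemma subst_mult: "subst f (p * q) = subst f p * subst f q"
proof -
  have "p * q = (\<Sum>m\<in>Poly_Mapping.keys p. \<Sum>n\<in>Poly_Mapping.keys q.
      Poly_Mapping.single m (Poly_Mapping.lookup p m) * Poly_Mapping.single n (Poly_Mapping.lookup q n))"
    by (subst (1 2) poly_mapping_sum_single_keys) (simp add: sum_product)
  then have "subst f (p * q) = (\<Sum>m\<in>Poly_Mapping.keys p. \<Sum>n\<in>Poly_Mapping.keys q.
      mconst (Poly_Mapping.lookup p m) * monom_eval f m * (mconst (Poly_Mapping.lookup q n) * monom_eval f n))"
    by (simp add: subst_sum mult_single subst_single monom_eval_add mult_ac)
  also have "\<dots> = subst f p * subst f q"
    by (simp add: subst_eq_sum_monom_eval sum_product)
  finally show ?thesis .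
qed

lemma subst_const [simp]: "subst f (mconst c) = mconst c"
  by (simp add: subst_single monom_eval_def)

lemma subst_Var [simp]: "subst f (Var x) = f x"
  by (simp add: Var_def subst_single monom_eval_def)

lemma subst_diff: "subst f (p - q) = subst f p - subst f q"
  by (metis add_diff_cancel diff_add_cancel subst_add)

lemma subst_Var_id: "subst Var p = p"
  by (subst (2) poly_mapping_sum_single_keys)
     (simp add: subst_eq_sum_monom_eval monom_eval_Var mult_single)

lemma mpoly_induct [case_names add mult const Var]:
  fixes P :: "('v, 'k::comm_ring_1) mpoly \<Rightarrow> bool"
  assumes add: "\<And>p q. P p \<Longrightarrow> P q \<Longrightarrow> P (p + q)"
    and mult: "\<And>p q. P p \<Longrightarrow> P q \<Longrightarrow> P (p * q)"
    and const: "\<And>c. P (mconst c)"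
    and Var: "\<And>x. P (Var x)"
  shows "P p"
proof -
  have P_sum: "P (sum g A)" if "\<And>x. P (g x)" for g :: "'a \<Rightarrow> ('v, 'k) mpoly" and A
    using that by (induction A rule: infinite_finite_induct) (simp_all add: add const[of 0, simplified])
  have P_prod: "P (prod g A)" if "\<And>x. P (g x)" for g :: "'a \<Rightarrow> ('v, 'k) mpoly" and A
    using that by (induction A rule: infinite_finite_induct) (simp_all add: mult const[of 1, simplified])
  have P_power: "P (q ^ n)" if "P q" for q n
    using that by (induction n) (simp_all add: mult const[of 1, simplified])
  have "P (subst Var p)"
    unfolding subst_eq_sum_monom_eval monom_eval_def
    by (intro P_sum mult const P_prod P_power Var)
  then show ?thesis
    by (simp only: subst_Var_id)
qed

lemma subst_subst: "subst f (subst g p) = subst (\<lambda>x. subst f (g x)) p"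
  by (induction p rule: mpoly_induct) (simp_all add: subst_add subst_mult)

lemma subst_right_inverse:
  assumes "\<And>i. subst f (h i) = Var i"
  shows "subst f (subst h p) = p"
  by (simp add: subst_subst assms subst_Var_id)

lemma dvd_diff_subst:
  assumes "\<And>v. r dvd Var v - h v"
  shows "r dvd p - subst h p"
proof (induction p rule: mpoly_induct)
  case (add p q)
  have "p + q - subst h (p + q) = (p - subst h p) + (q - subst h q)"
    by (simp add: subst_add)
  then show ?case
    using dvd_add[OF add] by (simp only:)
next
  case (mult p q)
  have "p * q - subst h (p * q) = q * (p - subst h p) + subst h p * (q - subst h q)"
    by (simp add: subst_mult algebra_simps)
  then show ?case
    using dvd_add[OF dvd_mult[OF mult(1)] dvd_mult[OF mult(2)]] by (simp only:)
qed (simp_all add: assms)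

lemma subst_eq_0_iff_dvd:
  assumes "\<And>v. r dvd Var v - subst h (subst f (Var v))" and "subst f r = 0"
  shows "subst f a = 0 \<longleftrightarrow> r dvd a"
proof
  assume "subst f a = 0"
  moreover have "r dvd a - subst h (subst f a)"
    unfolding subst_subst by (rule dvd_diff_subst) (use assms(1) in simp)
  ultimately show "r dvd a"
    by simp
next
  assume "r dvd a"
  then show "subst f a = 0"
    by (auto simp: subst_mult assms(2))
qed

section \<open>Linear forms\<close>

lemma mconst_sum: "mconst (sum g A) = (\<Sum>x\<in>A. mconst (g x))"
  by (induction A rule: infinite_finite_induct) (simp_all add: single_add)

definition linear_form :: "('v::finite \<Rightarrow> 'k::comm_ring_1) \<Rightarrow> ('v, 'k) mpoly" where
  "linear_form a = (\<Sum>v\<in>UNIV. mconst (a v) * Var v)"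

lemma subst_linear_form: "subst h (linear_form a) = (\<Sum>v\<in>UNIV. mconst (a v) * h v)"
  by (simp add: linear_form_def subst_sum subst_mult)

lemma linear_form_indicator: "linear_form (\<lambda>w. of_bool (w = v)) = Var v"
proof -
  have "linear_form (\<lambda>w. of_bool (w = v)) = (\<Sum>w\<in>UNIV. if w = v then Var w else 0)"
    unfolding linear_form_def by (rule sum.cong) simp_all
  then show ?thesis
    by simp
qed

lemma linear_form_combination:
  "(\<Sum>i\<in>A. mconst (c i) * linear_form (g i)) = linear_form (\<lambda>v. \<Sum>i\<in>A. c i * g i v)"
  unfolding linear_form_def
  by (simp add: mconst_sum mult_single sum_distrib_left sum_distrib_right flip: mult.assoc) (rule sum.swap)

lemma linear_form_diff: "linear_form a - linear_form b = linear_form (\<lambda>v. a v - b v)"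
  by (simp add: linear_form_def single_diff left_diff_distrib sum_subtractf)

lemma linear_form_scale: "linear_form (\<lambda>v. c * a v) = mconst c * linear_form a"
  by (simp add: linear_form_def sum_distrib_left mult_single flip: mult.assoc)

section \<open>Endpoint sums on the bipartite graph\<close>

lemma linear_fun_surj_card_Suc:
  fixes L :: "('v::finite \<Rightarrow> 'k::field) \<Rightarrow> 'i::finite \<Rightarrow> 'k"
  assumes card: "CARD('v) = CARD('i) + 1"
    and add: "\<And>a b. L (\<lambda>v. a v + b v) = (\<lambda>i. L a i + L b i)"
    and scale: "\<And>c a. L (\<lambda>v. c * a v) = (\<lambda>i. c * L a i)"
    and kernel: "\<And>a. L a = (\<lambda>_. 0) \<Longrightarrow> a v\<^sub>0 = 0 \<Longrightarrow> a = (\<lambda>_. 0)"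
  shows "surj L"
proof -
  have "card (UNIV - {v\<^sub>0}) = CARD('i)"
    using card by (simp only: card_Diff_singleton finite UNIV_I)
  then obtain e where e: "bij_betw e (UNIV - {v\<^sub>0}) (UNIV :: 'i set)"
    using finite_same_card_bij[OF finite finite] by blast
  \<comment> \<open>Dropping the coordinate \<open>v\<^sub>0\<close> turns \<open>L\<close> into an injective, hence surjective,
    endomorphism of \<open>'k^'i\<close>.\<close>
  define extend :: "'k^'i \<Rightarrow> 'v \<Rightarrow> 'k" where
    "extend b v = (if v = v\<^sub>0 then 0 else b $ e v)" for b v
  define K where "K b = (\<chi> i. L (extend b) i)" for b
  have "extend (b + c) = (\<lambda>v. extend b v + extend c v)" "extend (r *s b) = (\<lambda>v. r * extend b v)" for b c r
    by (simp_all add: extend_def fun_eq_iff)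
  then have linear: "Vector_Spaces.linear (*s) (*s) K"
    unfolding Vector_Spaces.linear_iff
    by (simp add: vec_eq_iff K_def add scale vec.vector_space_axioms)
  have "inj K"
    unfolding vec.linear_inj_iff_eq_0[OF linear]
  proof (intro allI impI)
    fix b assume "K b = 0"
    then have "L (extend b) = (\<lambda>_. 0)"
      by (simp add: K_def vec_eq_iff fun_eq_iff)
    then have "extend b = (\<lambda>_. 0)"
      by (rule kernel) (simp add: extend_def)
    show "b = 0"
    proof (rule vec_eq_iff[THEN iffD2, rule_format])
      fix i
      have "i \<in> e ` (UNIV - {v\<^sub>0})"
        using e by (simp add: bij_betw_def)
      then obtain v where "v \<noteq> v\<^sub>0" "e v = i"
        by blast
      then show "b $ i = 0 $ i"
        using fun_cong[OF \<open>extend b = (\<lambda>_. 0)\<close>, of v] by (simp add: extend_def)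
    qed
  qed
  then have "surj K"
    by (rule vec.linear_inj_imp_surj[OF linear])
  have "y \<in> range L" for y
  proof -
    obtain b where "K b = vec_lambda y"
      using \<open>surj K\<close> by (metis surjD)
    then have "L (extend b) = y"
      by (simp add: K_def vec_eq_iff fun_eq_iff)
    then show ?thesis
      by blast
  qed
  then show ?thesis
    by blast
qed

definition endpoint_sum :: "('i \<Rightarrow> 'r) \<Rightarrow> ('i \<Rightarrow> 's) \<Rightarrow> ('r + 's \<Rightarrow> 'k::comm_ring_1) \<Rightarrow> 'i \<Rightarrow> 'k" where
  "endpoint_sum \<pi>R \<pi>S a i = a (Inl (\<pi>R i)) + a (Inr (\<pi>S i))"

definition side_sign :: "'r + 's \<Rightarrow> 'k::comm_ring_1" where
  "side_sign = case_sum (\<lambda>_. 1) (\<lambda>_. -1)"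

lemma side_sign_square [simp]: "side_sign v * side_sign v = 1"
  by (cases v) (simp_all add: side_sign_def)

lemma endpoint_sum_zero_imp_signed_constant:
  assumes "(bip_adj \<pi>R \<pi>S)\<^sup>*\<^sup>* x y" and "\<And>i. endpoint_sum \<pi>R \<pi>S a i = 0"
  shows "side_sign x * a x = side_sign y * a y"
  using assms(1)
proof (induction rule: rtranclp_induct)
  case (step y z)
  from step.hyps(2) obtain i
    where edge: "y = Inr (\<pi>S i) \<and> z = Inl (\<pi>R i) \<or> y = Inl (\<pi>R i) \<and> z = Inr (\<pi>S i)"
    unfolding bip_adj_def by blast
  have "a (Inl (\<pi>R i)) = - a (Inr (\<pi>S i))"
    using assms(2)[of i] by (simp add: endpoint_sum_def eq_neg_iff_add_eq_0)
  with edge have "side_sign y * a y = side_sign z * a z"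
    by (elim disjE conjE) (simp_all add: side_sign_def)
  with step.IH show ?case
    by simp
qed simp

lemma complementary_connected:
  "complementary \<pi>R \<pi>S \<Longrightarrow> (bip_adj \<pi>R \<pi>S)\<^sup>*\<^sup>* x y"
  unfolding complementary_def bip_is_tree_def by (elim conjE allE) assumption

lemma complementary_card:
  "complementary (\<pi>R :: 'i::finite \<Rightarrow> 'r::finite) (\<pi>S :: 'i \<Rightarrow> 's::finite) \<Longrightarrow> CARD('r + 's) = CARD('i) + 1"
  unfolding complementary_def bip_is_tree_def by (elim conjE) (erule sym)

lemma complementary_endpoint_sum_surj:
  fixes \<pi>R :: "'i::finite \<Rightarrow> 'r::finite" and \<pi>S :: "'i \<Rightarrow> 's::finite"
  assumes "complementary \<pi>R \<pi>S"
  shows "surj (endpoint_sum \<pi>R \<pi>S :: ('r + 's \<Rightarrow> 'k::field) \<Rightarrow> 'i \<Rightarrow> 'k)"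
proof (rule linear_fun_surj_card_Suc)
  fix v\<^sub>0 :: "'r + 's"
  show "CARD('r + 's) = CARD('i) + 1"
    using assms by (rule complementary_card)
  show "endpoint_sum \<pi>R \<pi>S (\<lambda>v. a v + b v) = (\<lambda>i. endpoint_sum \<pi>R \<pi>S a i + endpoint_sum \<pi>R \<pi>S b i)"
    and "endpoint_sum \<pi>R \<pi>S (\<lambda>v. c * a v) = (\<lambda>i. c * endpoint_sum \<pi>R \<pi>S a i)" for a b :: "'r + 's \<Rightarrow> 'k" and c
    by (simp_all add: endpoint_sum_def fun_eq_iff distrib_left)
  show "a = (\<lambda>_. 0)" if "endpoint_sum \<pi>R \<pi>S a = (\<lambda>_. 0)" "a v\<^sub>0 = 0" for a
  proof
    fix v
    have "side_sign v * a v = side_sign v\<^sub>0 * a v\<^sub>0"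
      using complementary_connected[OF assms] by (rule endpoint_sum_zero_imp_signed_constant) (simp add: that(1))
    then have "side_sign v * (side_sign v * a v) = 0"
      using that(2) by simp
    then show "a v = 0"
      by (simp flip: mult.assoc)
  qed
qed

section \<open>The tensor map\<close>

lemma sum_UNIV_sum_type:
  "(\<Sum>v\<in>(UNIV :: ('r::finite + 's::finite) set). g v) = (\<Sum>r\<in>UNIV. g (Inl r)) + (\<Sum>s\<in>UNIV. g (Inr s))"
  by (subst UNIV_Plus_UNIV[symmetric]) (simp only: sum.Plus[OF finite finite] comp_def)

definition fibre_sum :: "('i::finite \<Rightarrow> 'r) \<Rightarrow> 'r \<Rightarrow> ('i, 'k::comm_ring_1) mpoly" where
  "fibre_sum \<pi> r = (\<Sum>i | \<pi> i = r. Var i)"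

lemma phi_eq_subst: "phi \<pi> = subst (fibre_sum \<pi>)"
  by (simp add: phi_def fibre_sum_def[abs_def])

lemma tensor_map_eq_subst: "tensor_map \<pi>R \<pi>S = subst (case_sum (fibre_sum \<pi>R) (fibre_sum \<pi>S))"
  by (simp add: tensor_map_def fibre_sum_def[abs_def])

lemma tensor_map_add: "tensor_map \<pi>R \<pi>S (a + b) = tensor_map \<pi>R \<pi>S a + tensor_map \<pi>R \<pi>S b"
  by (simp add: tensor_map_eq_subst subst_add)

lemma tensor_map_mult: "tensor_map \<pi>R \<pi>S (a * b) = tensor_map \<pi>R \<pi>S a * tensor_map \<pi>R \<pi>S b"
  by (simp add: tensor_map_eq_subst subst_mult)

lemma sum_mult_fibre_sum:
  fixes \<pi> :: "'i::finite \<Rightarrow> 'r::finite"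
  shows "(\<Sum>r\<in>UNIV. mconst (c r) * fibre_sum \<pi> r) = (\<Sum>i\<in>UNIV. mconst (c (\<pi> i)) * Var i)"
proof -
  have "mconst (c r) * fibre_sum \<pi> r = (\<Sum>i | \<pi> i = r. mconst (c (\<pi> i)) * Var i)" for r
    by (auto simp: fibre_sum_def sum_distrib_left intro: sum.cong)
  then show ?thesis
    using sum.group[of UNIV UNIV \<pi> "\<lambda>i. mconst (c (\<pi> i)) * Var i"] by simp
qed

lemma tensor_map_rename_Inl: "tensor_map \<pi>R \<pi>S (rename Inl p) = phi \<pi>R p"
  by (simp add: tensor_map_eq_subst phi_eq_subst rename_def subst_subst)

lemma tensor_map_rename_Inr: "tensor_map \<pi>R \<pi>S (rename Inr q) = phi \<pi>S q"
  by (simp add: tensor_map_eq_subst phi_eq_subst rename_def subst_subst)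

lemma tensor_map_linear_form:
  "tensor_map \<pi>R \<pi>S (linear_form a) = linear_form (endpoint_sum \<pi>R \<pi>S a)"
proof -
  have "tensor_map \<pi>R \<pi>S (linear_form a)
      = (\<Sum>i\<in>UNIV. mconst (a (Inl (\<pi>R i))) * Var i) + (\<Sum>i\<in>UNIV. mconst (a (Inr (\<pi>S i))) * Var i)"
    by (simp add: tensor_map_eq_subst subst_linear_form sum_UNIV_sum_type sum_mult_fibre_sum)
  then show ?thesis
    by (simp add: linear_form_def endpoint_sum_def single_add distrib_right sum.distrib)
qed

lemma linear_form_side_sign: "linear_form side_sign = tensor_rel"
  by (simp add: linear_form_def side_sign_def tensor_rel_def sum_UNIV_sum_type single_uminus sum_negf)

lemma tensor_map_tensor_rel: "tensor_map \<pi>R \<pi>S (tensor_rel :: ('r::finite + 's::finite, 'k::comm_ring_1) mpoly) = 0"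
proof -
  have "endpoint_sum \<pi>R \<pi>S (side_sign :: 'r + 's \<Rightarrow> 'k) i = 0" for i
    by (simp add: endpoint_sum_def side_sign_def)
  then show ?thesis
    unfolding linear_form_side_sign[symmetric] tensor_map_linear_form by (simp add: linear_form_def)
qed

lemma tensor_rel_dvd_linear_form:
  assumes "\<And>x y. (bip_adj \<pi>R \<pi>S)\<^sup>*\<^sup>* x y" and "\<And>i. endpoint_sum \<pi>R \<pi>S a i = 0"
  shows "tensor_rel dvd linear_form a"
proof -
  fix v\<^sub>0
  define c where "c = side_sign v\<^sub>0 * a v\<^sub>0"
  have "a = (\<lambda>v. c * side_sign v)"
  proof
    fix v
    have "side_sign v * a v = c"
      unfolding c_def by (rule endpoint_sum_zero_imp_signed_constant[OF assms])
    then have "side_sign v * (side_sign v * a v) = side_sign v * c"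
      by simp
    then show "a v = c * side_sign v"
      by (simp add: mult.commute flip: mult.assoc)
  qed
  then have "linear_form a = mconst c * tensor_rel"
    by (simp add: linear_form_scale linear_form_side_sign)
  then show ?thesis
    by simp
qed

lemma complementary_tensor_map_lift:
  fixes \<pi>R :: "'i::finite \<Rightarrow> 'r::finite" and \<pi>S :: "'i \<Rightarrow> 's::finite"
  assumes "complementary \<pi>R \<pi>S"
  obtains h :: "'i \<Rightarrow> ('r + 's, 'k::field) mpoly"
  where "\<And>i. tensor_map \<pi>R \<pi>S (h i) = Var i"
    and "\<And>v. tensor_rel dvd Var v - subst h (tensor_map \<pi>R \<pi>S (Var v))"
proof -
  let ?L = "endpoint_sum \<pi>R \<pi>S :: ('r + 's \<Rightarrow> 'k) \<Rightarrow> 'i \<Rightarrow> 'k"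
  define g where "g i = inv ?L (\<lambda>j. of_bool (j = i))" for i
  have g: "?L (g i) = (\<lambda>j. of_bool (j = i))" for i
    unfolding g_def by (rule surj_f_inv_f[OF complementary_endpoint_sum_surj[OF assms]])
  define h where "h i = linear_form (g i)" for i
  have "tensor_map \<pi>R \<pi>S (h i) = Var i" for i
    by (simp add: h_def tensor_map_linear_form g linear_form_indicator)
  moreover have "tensor_rel dvd Var v - subst h (tensor_map \<pi>R \<pi>S (Var v))" for v
  proof -
    define b where "b = ?L (\<lambda>w. of_bool (w = v))"
    \<comment> \<open>\<open>d\<close> is the coefficient vector of the residue; \<open>?L\<close> kills it because \<open>?L (g i)\<close> is
      the \<open>i\<close>-th unit vector.\<close>
    define d where "d = (\<lambda>w. of_bool (w = v) - (\<Sum>i\<in>UNIV. b i * g i w))"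
    have "Var v - subst h (tensor_map \<pi>R \<pi>S (Var v)) = linear_form d"
      unfolding linear_form_indicator[symmetric] tensor_map_linear_form subst_linear_form
      by (simp add: h_def linear_form_combination linear_form_diff d_def b_def)
    moreover have "?L d j = 0" for j
    proof -
      have "?L d j = b j - (\<Sum>i\<in>UNIV. b i * ?L (g i) j)"
        by (simp add: d_def b_def endpoint_sum_def sum.distrib algebra_simps)
      then show ?thesis
        by (simp add: g)
    qed
    moreover have "tensor_rel dvd linear_form d"
      using complementary_connected[OF assms] \<open>\<And>j. ?L d j = 0\<close> by (rule tensor_rel_dvd_linear_form)
    ultimately show ?thesis
      by simp
  qed
  ultimately show ?thesis
    by (rule that)
qed

lemma complementary_tensor_map_eq_0_iff:
  fixes \<pi>R :: "'i::finite \<Rightarrow> 'r::finite" and \<pi>S :: "'i \<Rightarrow> 's::finite"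
  assumes "complementary \<pi>R \<pi>S"
  shows "tensor_map \<pi>R \<pi>S a = 0 \<longleftrightarrow> tensor_rel dvd (a :: ('r + 's, 'k::field) mpoly)"
proof -
  obtain h :: "'i \<Rightarrow> ('r + 's, 'k) mpoly"
    where "\<And>v. tensor_rel dvd Var v - subst h (tensor_map \<pi>R \<pi>S (Var v))"
    using complementary_tensor_map_lift[OF assms] by blast
  then show ?thesis
    using tensor_map_tensor_rel[of \<pi>R \<pi>S] unfolding tensor_map_eq_subst by (rule subst_eq_0_iff_dvd)
qed

lemma complementary_tensor_map_surj:
  fixes \<pi>R :: "'i::finite \<Rightarrow> 'r::finite" and \<pi>S :: "'i \<Rightarrow> 's::finite"
  assumes "complementary \<pi>R \<pi>S"
  shows "surj (tensor_map \<pi>R \<pi>S :: ('r + 's, 'k::field) mpoly \<Rightarrow> ('i, 'k) mpoly)"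
proof -
  obtain h :: "'i \<Rightarrow> ('r + 's, 'k) mpoly" where "\<And>i. tensor_map \<pi>R \<pi>S (h i) = Var i"
    using complementary_tensor_map_lift[OF assms] by blast
  then show ?thesis
    unfolding tensor_map_eq_subst by (metis subst_right_inverse surjI)
qed

lemma bij_factor_of_same_fibres:
  assumes "surj \<pi>" "surj \<pi>'" "\<And>i j. \<pi>' i = \<pi>' j \<longleftrightarrow> \<pi> i = \<pi> j"
  obtains \<sigma> where "bij \<sigma>" "\<pi>' = \<sigma> \<circ> \<pi>"
proof
  define \<sigma> where "\<sigma> = \<pi>' \<circ> inv \<pi>"
  have \<sigma>: "\<sigma> (\<pi> i) = \<pi>' i" for i
    using assms(3) surj_f_inv_f[OF assms(1), of "\<pi> i"] by (simp add: \<sigma>_def)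
  show "\<pi>' = \<sigma> \<circ> \<pi>"
    by (simp add: fun_eq_iff \<sigma>)
  have "inj \<sigma>"
  proof (rule injI)
    fix a b assume "\<sigma> a = \<sigma> b"
    moreover obtain i j where "a = \<pi> i" "b = \<pi> j"
      using assms(1) by (metis surjD)
    ultimately show "a = b"
      using assms(3) by (simp add: \<sigma>)
  qed
  moreover have "surj \<sigma>"
    using assms(2) by (metis \<sigma> surj_def)
  ultimately show "bij \<sigma>"
    by (simp add: bij_def)
qed

lemma rename_tensor_rel:
  fixes \<sigma> :: "'r::finite \<Rightarrow> 'r2::finite" and \<tau> :: "'s::finite \<Rightarrow> 's2::finite"
  assumes "bij \<sigma>" "bij \<tau>"
  shows "rename (map_sum \<sigma> \<tau>) (tensor_rel :: ('r + 's, 'k::comm_ring_1) mpoly) = tensor_rel"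
proof -
  have "(\<Sum>r\<in>UNIV. Var (Inl (\<sigma> r))) = (\<Sum>r\<in>UNIV. Var (Inl r) :: ('r2 + 's2, 'k) mpoly)"
    using assms(1) by (rule sum.reindex_bij_betw[of \<sigma> UNIV UNIV "\<lambda>r. Var (Inl r)"])
  moreover have "(\<Sum>s\<in>UNIV. Var (Inr (\<tau> s))) = (\<Sum>s\<in>UNIV. Var (Inr s) :: ('r2 + 's2, 'k) mpoly)"
    using assms(2) by (rule sum.reindex_bij_betw[of \<tau> UNIV UNIV "\<lambda>s. Var (Inr s)"])
  ultimately show ?thesis
    by (simp add: rename_def tensor_rel_def subst_diff subst_sum)
qed

lemma fibre_sum_comp_inj: "inj \<sigma> \<Longrightarrow> fibre_sum (\<sigma> \<circ> \<pi>) (\<sigma> r) = fibre_sum \<pi> r"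
  by (simp add: fibre_sum_def inj_eq)

lemma tensor_map_rename:
  fixes \<pi>R :: "'i::finite \<Rightarrow> 'r" and \<pi>S :: "'i \<Rightarrow> 's"
    and a :: "('r + 's, 'k::comm_ring_1) mpoly"
  assumes "inj \<sigma>" "inj \<tau>"
  shows "tensor_map (\<sigma> \<circ> \<pi>R) (\<tau> \<circ> \<pi>S) (rename (map_sum \<sigma> \<tau>) a) = tensor_map \<pi>R \<pi>S a"
proof -
  have "case_sum (fibre_sum (\<sigma> \<circ> \<pi>R)) (fibre_sum (\<tau> \<circ> \<pi>S)) (map_sum \<sigma> \<tau> x)
      = (case_sum (fibre_sum \<pi>R) (fibre_sum \<pi>S) x :: ('i, 'k) mpoly)" for x
    by (cases x) (simp_all add: fibre_sum_comp_inj assms)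
  then show ?thesis
    by (simp add: tensor_map_eq_subst rename_def subst_subst)
qed

theorem lemma8p1:
  fixes \<pi>R :: "'i::finite \<Rightarrow> 'r::finite" and \<pi>S :: "'i \<Rightarrow> 's::finite"
    and \<pi>R' :: "'i \<Rightarrow> 'r2::finite" and \<pi>S' :: "'i \<Rightarrow> 's2::finite"
  assumes "surj \<pi>R" and "surj \<pi>S" and "complementary \<pi>R \<pi>S"
    and "surj \<pi>R'" and "surj \<pi>S'"
    and "\<forall>i j. \<pi>R' i = \<pi>R' j \<longleftrightarrow> \<pi>R i = \<pi>R j"
    and "\<forall>i j. \<pi>S' i = \<pi>S' j \<longleftrightarrow> \<pi>S i = \<pi>S j"
  shows "(\<forall>p q. tensor_map \<pi>R \<pi>S (rename Inl p * rename Inr q) = phi \<pi>R p * phi \<pi>S (q :: ('s, 'k::field) mpoly))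
    \<and> (\<forall>a b :: ('r + 's, 'k) mpoly. tensor_map \<pi>R \<pi>S (a + b) = tensor_map \<pi>R \<pi>S a + tensor_map \<pi>R \<pi>S b
          \<and> tensor_map \<pi>R \<pi>S (a * b) = tensor_map \<pi>R \<pi>S a * tensor_map \<pi>R \<pi>S b)
    \<and> tensor_map \<pi>R \<pi>S (tensor_rel :: ('r + 's, 'k) mpoly) = 0
    \<and> {a :: ('r + 's, 'k) mpoly. tensor_map \<pi>R \<pi>S a = 0} = range (\<lambda>c. c * tensor_rel)
    \<and> surj (tensor_map \<pi>R \<pi>S :: ('r + 's, 'k) mpoly \<Rightarrow> ('i, 'k) mpoly)
    \<and> (\<exists>\<sigma> \<tau>. bij \<sigma> \<and> bij \<tau> \<and> \<pi>R' = \<sigma> \<circ> \<pi>R \<and> \<pi>S' = \<tau> \<circ> \<pi>S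
          \<and> rename (map_sum \<sigma> \<tau>) (tensor_rel :: ('r + 's, 'k) mpoly) = tensor_rel
          \<and> (\<forall>a :: ('r + 's, 'k) mpoly. tensor_map \<pi>R' \<pi>S' (rename (map_sum \<sigma> \<tau>) a) = tensor_map \<pi>R \<pi>S a))"
proof -
  have kernel: "{a :: ('r + 's, 'k) mpoly. tensor_map \<pi>R \<pi>S a = 0} = range (\<lambda>c. c * tensor_rel)"
    by (auto simp: complementary_tensor_map_eq_0_iff[OF assms(3)] dvd_def mult.commute)
  obtain \<sigma> where \<sigma>: "bij \<sigma>" "\<pi>R' = \<sigma> \<circ> \<pi>R"
    using bij_factor_of_same_fibres[OF assms(1,4) assms(6)[rule_format]] by blast
  obtain \<tau> where \<tau>: "bij \<tau>" "\<pi>S' = \<tau> \<circ> \<pi>S"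
    using bij_factor_of_same_fibres[OF assms(2,5) assms(7)[rule_format]] by blast
  have "tensor_map \<pi>R' \<pi>S' (rename (map_sum \<sigma> \<tau>) a) = tensor_map \<pi>R \<pi>S a" for a :: "('r + 's, 'k) mpoly"
    unfolding \<sigma>(2) \<tau>(2) using \<sigma>(1) \<tau>(1) by (intro tensor_map_rename bij_is_inj)
  with \<sigma> \<tau> kernel rename_tensor_rel[OF \<sigma>(1) \<tau>(1)] show ?thesis
    by (simp add: tensor_map_add tensor_map_mult tensor_map_rename_Inl tensor_map_rename_Inr
        tensor_map_tensor_rel complementary_tensor_map_surj[OF assms(3)] del: comp_apply) blast
qed

end
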